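(* Let $W$ be a symmetric binary-input discrete memoryless channel with finite output alphabet $\mathcal{Y}$, let $S_1=|\{y\in\mathcal{Y}:1\cdot y=y\}|$ and $S_2=|\{y\in\mathcal{Y}:1\cdot y\ne y\}|$, and let $N=2^n$. Then the number $n_c(N,0,S_1,S_2)$ of distinct values of $W_N^{(0)}(\mathbf{y})$ as $\mathbf{y}$ ranges over $\mathcal{Y}^N$ satisfies $$n_c(N,0,S_1,S_2)\le\binom{N+S_2/2+S_1-1}{S_2/2+S_1-1}.$$
   Context: Symmetric channel: $W(y|x)$, $x\in\{0,1\}$, with an involution $y\mapsto 1\cdot y$ of $\mathcal{Y}$ such that $W(1\cdot y|0)=W(y|1)$ and $W(1\cdot y|1)=W(y|0)$ ($S_2$ is thus even). $W^N(\mathbf{y}|\mathbf{x})=\prod_j W(y_j|x_j)$. With $G_N=F^{\otimes n}$, $F=\begin{pmatrix}1&0\\1&1\end{pmatrix}$ over $\mathbb{F}_2$ (invertible, so its row space is $\mathbb{F}_2^N$), $W_N^{(0)}(\mathbf{y})=\frac{1}{2^{N-1}}\sum_{\mathbf{c}\in\mathbb{F}_2^N}W^N(\mathbf{y}|\mathbf{c})$. *)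

theory Defs
  imports Complex_Main
begin

text \<open>Binary input x in {0,1} is encoded as bool (False = 0, True = 1).
  A channel is W :: bool => 'y => real, W x y = W(y|x).
  Vectors in Y^N and F_2^N are lists of length N.\<close>

definition WN_prod :: "(bool \<Rightarrow> 'y \<Rightarrow> real) \<Rightarrow> 'y list \<Rightarrow> bool list \<Rightarrow> real" where
  "WN_prod W ys cs = (\<Prod>j<length ys. W (cs ! j) (ys ! j))"

definition WN0 :: "(bool \<Rightarrow> 'y \<Rightarrow> real) \<Rightarrow> nat \<Rightarrow> 'y list \<Rightarrow> real" where
  "WN0 W N ys = (1 / 2 ^ (N - 1)) * (\<Sum>cs\<in>{cs :: bool list. length cs = N}. WN_prod W ys cs)"

definition symmetric_bdmc :: "(bool \<Rightarrow> 'y \<Rightarrow> real) \<Rightarrow> ('y \<Rightarrow> 'y) \<Rightarrow> bool" where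
  "symmetric_bdmc W flip \<longleftrightarrow>
     (\<forall>x y. W x y \<ge> 0) \<and> (\<forall>x. (\<Sum>y\<in>UNIV. W x y) = 1) \<and>
     (\<forall>y. flip (flip y) = y) \<and>
     (\<forall>y. W False (flip y) = W True y) \<and> (\<forall>y. W True (flip y) = W False y)"

end

theory Submission
  imports Defs "HOL-Library.Multiset"
begin

text \<open>Summing the memoryless likelihood over all codewords factorises letter by letter, so
  \<open>W\<^sub>N\<^sup>(\<^sup>0\<^sup>)(y)\<close> is a constant times \<open>\<Prod>\<^sub>j g(y\<^sub>j)\<close> with \<open>g(y) = W(y|0) + W(y|1)\<close>.
  By symmetry \<open>g\<close> is constant on the orbits \<open>{y, 1\<cdot>y}\<close> of the involution, of which there are
  \<open>K = S\<^sub>1 + S\<^sub>2/2\<close>. The product therefore depends only on the multiset of orbits met by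
  \<open>y\<close>, and there are \<open>(K + N - 1 choose N)\<close> multisets of size \<open>N\<close> over \<open>K\<close> orbits.\<close>

lemma sum_lists_prod_nth:
  fixes W :: "'x::finite \<Rightarrow> 'y \<Rightarrow> 'a::comm_semiring_1"
  shows "(\<Sum>cs | length cs = length ys. \<Prod>j<length ys. W (cs ! j) (ys ! j))
         = (\<Prod>y\<leftarrow>ys. \<Sum>x\<in>UNIV. W x y)"
proof (induction ys)
  case Nil
  then show ?case by simp
next
  case (Cons y ys)
  let ?L = "{cs :: 'x list. length cs = length ys}"
  let ?P = "\<lambda>cs. \<Prod>j<length ys. W (cs ! j) (ys ! j)"
  have lists_Suc: "{cs :: 'x list. length cs = Suc (length ys)} = (\<lambda>(x, cs). x # cs) ` (UNIV \<times> ?L)"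
    by (auto simp: length_Suc_conv image_iff)
  have inj: "inj_on (\<lambda>(x, cs). x # cs) (UNIV \<times> ?L)"
    by (auto simp: inj_on_def)
  have "(\<Sum>cs | length cs = length (y # ys). \<Prod>j<length (y # ys). W (cs ! j) ((y # ys) ! j))
      = (\<Sum>(x, cs)\<in>UNIV \<times> ?L. \<Prod>j<Suc (length ys). W ((x # cs) ! j) ((y # ys) ! j))"
    by (simp only: length_Cons lists_Suc sum.reindex[OF inj] o_def) (simp add: split_def)
  also have "\<dots> = (\<Sum>(x, cs)\<in>UNIV \<times> ?L. W x y * ?P cs)"
    by (simp only: prod.lessThan_Suc_shift nth_Cons_0 nth_Cons_Suc)
  also have "\<dots> = (\<Sum>x\<in>UNIV. W x y) * sum ?P ?L"
    by (simp add: sum_product sum.cartesian_product)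
  finally show ?case
    using Cons.IH by simp
qed

lemma card_prod_list_image_le:
  fixes g :: "'y \<Rightarrow> 'a::comm_monoid_mult" and q :: "'y \<Rightarrow> 'c"
  assumes fin: "finite (range q)" and g_class: "\<And>x y. q x = q y \<Longrightarrow> g x = g y"
  shows "card ((\<lambda>ys. \<Prod>y\<leftarrow>ys. g y) ` {ys. length ys = N}) \<le> (card (range q) + N - 1) choose N"
proof -
  define h where "h c = g (SOME y. q y = c)" for c
  have h_q: "h (q y) = g y" for y
    unfolding h_def using someI[of "\<lambda>z. q z = q y" y] g_class by metis
  define F where "F M = prod_mset (image_mset h M)" for M
  have "(\<lambda>ys. \<Prod>y\<leftarrow>ys. g y) ` {ys. length ys = N} \<subseteq> F ` multisets_of_size (range q) N"
  proof
    fix v assume "v \<in> (\<lambda>ys. \<Prod>y\<leftarrow>ys. g y) ` {ys. length ys = N}"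
    then obtain ys where len: "length ys = N" and v: "v = (\<Prod>y\<leftarrow>ys. g y)" by blast
    have "v = F (mset (map q ys))"
      unfolding v F_def by (simp add: h_q prod_mset_prod_list[symmetric] image_mset.compositionality o_def)
    moreover have "mset (map q ys) \<in> multisets_of_size (range q) N"
      using len by (auto simp: multisets_of_size_def)
    ultimately show "v \<in> F ` multisets_of_size (range q) N" by blast
  qed
  then have "card ((\<lambda>ys. \<Prod>y\<leftarrow>ys. g y) ` {ys. length ys = N}) \<le> card (F ` multisets_of_size (range q) N)"
    by (rule card_mono[rotated]) (simp add: finite_multisets_of_size[OF fin])
  also have "\<dots> \<le> card (multisets_of_size (range q) N)"
    by (rule card_image_le) (simp add: finite_multisets_of_size[OF fin])
  also have "\<dots> = (card (range q) + N - 1) choose N"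
    by (rule card_multisets_of_size[OF fin])
  finally show ?thesis .
qed

lemma card_involution_orbits:
  fixes flip :: "'y::finite \<Rightarrow> 'y"
  assumes inv: "\<And>y. flip (flip y) = y"
  shows "card (range (\<lambda>y. {y, flip y})) = card {y. flip y = y} + card {y. flip y \<noteq> y} div 2"
proof -
  define orb where "orb y = {y, flip y}" for y
  define A where "A = {y. flip y = y}"
  define B where "B = {y. flip y \<noteq> y}"
  have orbits: "range orb = orb ` A \<union> orb ` B" and disj: "orb ` A \<inter> orb ` B = {}"
    unfolding orb_def A_def B_def by (auto simp: doubleton_eq_iff)
  have card_A: "card (orb ` A) = card A"
    by (rule card_image) (auto simp: inj_on_def orb_def A_def)
  have "2 * card (orb ` B) = card (\<Union>(orb ` B))"
  proof (rule card_partition)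
    show "\<And>c. c \<in> orb ` B \<Longrightarrow> card c = 2"
      unfolding orb_def B_def by auto
    show "\<And>c1 c2. c1 \<in> orb ` B \<Longrightarrow> c2 \<in> orb ` B \<Longrightarrow> c1 \<noteq> c2 \<Longrightarrow> c1 \<inter> c2 = {}"
      unfolding orb_def B_def using inv by auto metis+
  qed simp_all
  moreover have "\<Union>(orb ` B) = B"
    unfolding orb_def B_def using inv by auto
  ultimately have card_B: "card (orb ` B) = card B div 2" by simp
  show ?thesis
    using card_Un_disjoint[of "orb ` A" "orb ` B"] disj card_A card_B
    unfolding orbits[unfolded orb_def] by (simp add: orb_def A_def B_def)
qed

theorem theorem5:
  fixes W :: "bool \<Rightarrow> 'y::finite \<Rightarrow> real" and flip :: "'y \<Rightarrow> 'y" and n :: nat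
  assumes "symmetric_bdmc W flip"
  defines "S1 \<equiv> card {y. flip y = y}" and "S2 \<equiv> card {y. flip y \<noteq> y}" and "N \<equiv> 2 ^ n"
  shows "card (WN0 W N ` {ys :: 'y list. length ys = N})
           \<le> (N + S2 div 2 + S1 - 1) choose (S2 div 2 + S1 - 1)"
proof -
  have inv: "\<And>y. flip (flip y) = y" and g_flip: "\<And>y. (\<Sum>x\<in>UNIV. W x (flip y)) = (\<Sum>x\<in>UNIV. W x y)"
    using assms(1) unfolding symmetric_bdmc_def by (auto simp: UNIV_bool)
  let ?orbits = "range (\<lambda>y. {y, flip y})"
  let ?P = "\<lambda>ys. \<Prod>y\<leftarrow>ys. \<Sum>x\<in>UNIV. W x y"
  have lists_finite: "finite {ys :: 'y list. length ys = N}"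
    using finite_lists_length_eq[of "UNIV :: 'y set" N] by simp
  have "WN0 W N ` {ys. length ys = N} = (\<lambda>v. 1 / 2 ^ (N - 1) * v) ` ?P ` {ys. length ys = N}"
    unfolding image_image WN0_def WN_prod_def
    by (rule image_cong) (auto simp: sum_lists_prod_nth[where ys = "_ :: 'y list", symmetric])
  then have "card (WN0 W N ` {ys. length ys = N}) \<le> card (?P ` {ys. length ys = N})"
    by (simp add: card_image_le lists_finite)
  also have "\<dots> \<le> (card ?orbits + N - 1) choose N"
    by (rule card_prod_list_image_le) (auto simp: doubleton_eq_iff g_flip)
  also have "\<dots> = (card ?orbits + N - 1) choose (card ?orbits - 1)"
  proof -
    have "card ?orbits \<ge> 1"
      by (simp add: Suc_leI card_gt_0_iff)
    then show ?thesis
      using binomial_symmetric[of N "card ?orbits + N - 1"] by simp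
  qed
  finally show ?thesis
    unfolding card_involution_orbits[OF inv] S1_def S2_def by (simp add: ac_simps)
qed

end
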